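(* Let $\tilde r\in(\tfrac14,\tfrac12)$, set $\mu=2\cos(2\pi\tilde r)$, and let $(\tilde x,\tilde y,\tilde z)\in\mathbb{C}^3$ be the trace coordinates of a representation in $\mathcal M^{\tilde r}_{0,4}$, so that $$\tilde x^2+\tilde y^2+\tilde z^2+\tilde x\tilde y\tilde z-2\mu^2(\tilde x+\tilde y+\tilde z)+4(\mu^2-1)+\mu^4=0,$$ and assume $(\tilde x-2)(\tilde y-2)(\tilde z-2)\neq0$. Then, with $r=2\tilde r-\tfrac12$, there exists $(x,y,z)\in\mathbb{C}^3$, unique up to signs, satisfying $x^2+y^2+z^2-xyz-2-2\cos(2\pi r)=0$ (i.e. the trace coordinates of an element of $\mathcal M^r_{1,1}$) and $$\tilde x=2-x^2,\quad \tilde y=2-y^2,\quad \tilde z=2-z^2.$$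
   Context: $\mathcal M^{\tilde r}_{0,4}$ is the space of conjugacy classes of representations $\pi_1(S_4,s_0)\to\mathrm{SL}(2,\mathbb{C})$ of the four-punctured sphere, generated by loops $\gamma_{p_1},\dots,\gamma_{p_4}$ around the punctures with $\gamma_{p_4}\gamma_{p_3}\gamma_{p_2}\gamma_{p_1}=1$, such that each $M_j=\rho(\gamma_{p_j})$ has trace $2\cos(2\pi\tilde r)$; its trace coordinates are $\tilde x=\mathrm{Tr}(M_2M_1)$, $\tilde y=\mathrm{Tr}(M_3M_2)$, $\tilde z=\mathrm{Tr}(M_3M_1)$. $\mathcal M^r_{1,1}$ is the space of conjugacy classes of representations of the free group $\pi_1(T^2\setminus\{o\})=\langle\gamma_x,\gamma_y\rangle$ of a once-punctured torus into $\mathrm{SL}(2,\mathbb{C})$ such that the image of the commutator $\gamma_y^{-1}\gamma_x^{-1}\gamma_y\gamma_x$ has trace $2\cos(2\pi r)$; its trace coordinates are $x=\mathrm{Tr}X$, $y=\mathrm{Tr}Y$, $z=\mathrm{Tr}(YX)$, with $X,Y$ the images of $\gamma_x,\gamma_y$. *)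

theory Defs
  imports Complex_Main
begin

definition cubic_04 :: "complex \<Rightarrow> complex \<Rightarrow> complex \<Rightarrow> complex \<Rightarrow> complex" where
  "cubic_04 \<mu> tx ty tz = tx^2 + ty^2 + tz^2 + tx*ty*tz - 2*\<mu>^2*(tx+ty+tz) + 4*(\<mu>^2 - 1) + \<mu>^4"

definition cubic_11 :: "real \<Rightarrow> complex \<Rightarrow> complex \<Rightarrow> complex \<Rightarrow> complex" where
  "cubic_11 r x y z = x^2 + y^2 + z^2 - x*y*z - 2 - 2 * complex_of_real (cos (2*pi*r))"

end

theory Submission
  imports Defs
begin

text \<open>Substituting \<open>t = 2 - s\<^sup>2\<close> for each coordinate, the cubic of the four-punctured sphere
  with boundary traces \<open>\<mu> = 2 cos(2\<pi> rt)\<close> factors as \<open>\<kappa>(x,y,z) \<kappa>(-x,y,z)\<close>, where \<open>\<kappa>\<close> is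
  the cubic of the once-punctured torus with commutator trace \<open>2 cos(2\<pi>r)\<close>, \<open>r = 2 rt - 1/2\<close>;
  this value of \<open>r\<close> is forced by \<open>2 + 2 cos(2\<pi>r) = 4 - \<mu>\<^sup>2\<close>. Hence for arbitrary square roots of
  \<open>2 - t\<close> one of the two choices of sign for \<open>x\<close> lies on the torus cubic, and square roots are
  unique up to sign.\<close>

lemma cos_double_angle_minus_half_turn:
  "cos (2*pi*(2*r - 1/2)) = 1 - 2 * (cos (2*pi*r))^2"
proof -
  have "2*pi*(2*r - 1/2) = 2*(2*pi*r) - pi" by (simp add: algebra_simps)
  then have "cos (2*pi*(2*r - 1/2)) = - cos (2*(2*pi*r))" by simp
  also have "\<dots> = 1 - 2 * (cos (2*pi*r))^2" using cos_double_cos[of "2*pi*r"] by linarith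
  finally show ?thesis .
qed

lemma cubic_11_double_angle_minus_half_turn:
  "cubic_11 (2*r - 1/2) x y z
     = x^2 + y^2 + z^2 - x*y*z - 4 + (complex_of_real (2 * cos (2*pi*r)))^2"
  unfolding cubic_11_def cos_double_angle_minus_half_turn
  by (simp add: algebra_simps power2_eq_square)

lemma cubic_04_at_squares:
  "cubic_04 \<mu> (2 - x^2) (2 - y^2) (2 - z^2)
     = (x^2 + y^2 + z^2 - x*y*z - 4 + \<mu>^2) * (x^2 + y^2 + z^2 + x*y*z - 4 + \<mu>^2)"
  unfolding cubic_04_def by algebra

lemma cubic_04_at_squares_eq_cubic_11_product:
  "cubic_04 (complex_of_real (2 * cos (2*pi*r))) (2 - x^2) (2 - y^2) (2 - z^2)
     = cubic_11 (2*r - 1/2) x y z * cubic_11 (2*r - 1/2) (-x) y z"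
  unfolding cubic_04_at_squares cubic_11_double_angle_minus_half_turn by simp

lemma cubic_04_zero_lifts_to_cubic_11:
  assumes "cubic_04 (complex_of_real (2 * cos (2*pi*r))) tx ty tz = 0"
  shows "\<exists>x y z. cubic_11 (2*r - 1/2) x y z = 0 \<and> tx = 2 - x^2 \<and> ty = 2 - y^2 \<and> tz = 2 - z^2"
proof -
  define x y z where "x = csqrt (2 - tx)" and "y = csqrt (2 - ty)" and "z = csqrt (2 - tz)"
  have t: "tx = 2 - x^2" "ty = 2 - y^2" "tz = 2 - z^2"
    by (simp_all add: x_def y_def z_def)
  have "cubic_11 (2*r - 1/2) x y z * cubic_11 (2*r - 1/2) (-x) y z = 0"
    using assms unfolding t cubic_04_at_squares_eq_cubic_11_product .
  then consider "cubic_11 (2*r - 1/2) x y z = 0" | "cubic_11 (2*r - 1/2) (-x) y z = 0"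
    by auto
  then show ?thesis
  proof cases
    case 1
    with t show ?thesis by blast
  next
    case 2
    with t show ?thesis by (intro exI[of _ "-x"] exI[of _ y] exI[of _ z]) simp
  qed
qed

theorem proposition3p10:
  fixes rt :: real and tx ty tz :: complex
  assumes "1/4 < rt" and "rt < 1/2"
    and "cubic_04 (complex_of_real (2 * cos (2*pi*rt))) tx ty tz = 0"
    and "(tx - 2) * (ty - 2) * (tz - 2) \<noteq> 0"
  shows "(\<exists>x y z :: complex. cubic_11 (2*rt - 1/2) x y z = 0
            \<and> tx = 2 - x^2 \<and> ty = 2 - y^2 \<and> tz = 2 - z^2)
       \<and> (\<forall>x y z x' y' z' :: complex.
            cubic_11 (2*rt - 1/2) x y z = 0 \<and> tx = 2 - x^2 \<and> ty = 2 - y^2 \<and> tz = 2 - z^2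
            \<and> cubic_11 (2*rt - 1/2) x' y' z' = 0 \<and> tx = 2 - x'^2 \<and> ty = 2 - y'^2 \<and> tz = 2 - z'^2
            \<longrightarrow> (x' = x \<or> x' = - x) \<and> (y' = y \<or> y' = - y) \<and> (z' = z \<or> z' = - z))"
proof (rule conjI[OF cubic_04_zero_lifts_to_cubic_11[OF assms(3)]], intro allI impI)
  fix x y z x' y' z' :: complex
  assume "cubic_11 (2*rt - 1/2) x y z = 0 \<and> tx = 2 - x^2 \<and> ty = 2 - y^2 \<and> tz = 2 - z^2
            \<and> cubic_11 (2*rt - 1/2) x' y' z' = 0 \<and> tx = 2 - x'^2 \<and> ty = 2 - y'^2 \<and> tz = 2 - z'^2"
  then have "x'^2 = x^2" "y'^2 = y^2" "z'^2 = z^2" by auto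
  then show "(x' = x \<or> x' = - x) \<and> (y' = y \<or> y' = - y) \<and> (z' = z \<or> z' = - z)"
    by (simp add: power2_eq_iff)
qed

end
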